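(* Let $Q=(q_n)_{n\ge1}$ be a basic sequence that is infinite in limit, and let $F$ be a $Q$-special sequence. Then $x_F$ is not simply $Q$-normal.
   Context: A basic sequence is a sequence $Q=(q_n)_{n\ge1}$ of integers with $q_n\ge 2$; it is infinite in limit if $q_n\to\infty$. $\mathbb{N}$ denotes the positive integers. For each positive integer $j$ let $\nu_j=\min\{N : q_m\ge 2j^2 \text{ for all } m\ge N\}$. Define $l_1=\max(\nu_2-1,1)$ and, recursively for $i\ge 2$, $l_i=\max\big(\min\{k\in\mathbb{N} : l_1+2l_2+\cdots+(i-1)l_{i-1}+ik\ge \nu_{i+1}-1\},1\big)$. Put $L_i=\sum_{j=1}^i jl_j$ (with $L_0=0$). Let $S_Q=\{(a,b,c)\in\mathbb{N}^3 : b\le l_a,\ c\le a\}$ and $\phi_Q(a,b,c)=L_{a-1}+(b-1)a+c$; $\phi_Q$ is a bijection $S_Q\to\mathbb{N}$. A $Q$-special sequence is a family of integers $F=(F_{(a,b,c)})_{(a,b,c)\in S_Q}$ with $F_{(a,b,1)}=0$ for all $(a,b,1)\in S_Q$ and $\frac{F_{(a,b,c)}}{q_{\phi_Q(a,b,c)}}\in\left[\frac{c-1}{a}-\frac{1}{2a^2},\frac{c-1}{a}+\frac{1}{2a^2}\right]$ for $(a,b,c)\in S_Q$ with $c>1$. For such $F$ put $E_{F,n}=F_{\phi_Q^{-1}(n)}$ and $x_F=\sum_{n=1}^\infty \frac{E_{F,n}}{q_1q_2\cdots q_n}$; this is the $Q$-Cantor series expansion of $x_F$, with digits $E_{F,n}$.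 For a real $x\in[0,1)$ with $Q$-Cantor series expansion $x=\sum_n \frac{E_n}{q_1\cdots q_n}$ ($E_n\in\{0,\dots,q_n-1\}$, $E_n\ne q_n-1$ infinitely often) and a nonnegative integer $d$, let $N_n^Q(d,x)=\#\{1\le j\le n : E_j=d\}$ and $Q_n^{(1)}=\sum_{j=1}^n\frac1{q_j}$. The number $x$ is simply $Q$-normal if $\lim_{n\to\infty} N_n^Q(d,x)/Q_n^{(1)}=1$ for every nonnegative integer $d$ (blocks of length $1$). *)

theory Defs
  imports Complex_Main
begin

text \<open>A basic sequence q is indexed from 1 (the value q 0 is irrelevant).\<close>

definition basic_seq :: "(nat \<Rightarrow> nat) \<Rightarrow> bool" where
  "basic_seq q \<longleftrightarrow> (\<forall>n\<ge>1. q n \<ge> 2)"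

definition infinite_in_limit :: "(nat \<Rightarrow> nat) \<Rightarrow> bool" where
  "infinite_in_limit q \<longleftrightarrow> filterlim q at_top sequentially"

definition nu :: "(nat \<Rightarrow> nat) \<Rightarrow> nat \<Rightarrow> nat" where
  "nu q j = (LEAST N. N \<ge> 1 \<and> (\<forall>m\<ge>N. q m \<ge> 2 * j^2))"

definition lstep :: "(nat \<Rightarrow> nat) \<Rightarrow> nat \<Rightarrow> nat \<Rightarrow> nat" where
  "lstep q i Lp = (if i = 1 then max (nu q 2 - 1) 1
     else max (LEAST k. k \<ge> 1 \<and> Lp + i * k \<ge> nu q (i + 1) - 1) 1)"

fun Lseq :: "(nat \<Rightarrow> nat) \<Rightarrow> nat \<Rightarrow> nat" where
  "Lseq q 0 = 0"
| "Lseq q (Suc i) = Lseq q i + Suc i * lstep q (Suc i) (Lseq q i)"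

definition lseq :: "(nat \<Rightarrow> nat) \<Rightarrow> nat \<Rightarrow> nat" where
  "lseq q i = lstep q i (Lseq q (i - 1))"

definition S_Q :: "(nat \<Rightarrow> nat) \<Rightarrow> (nat \<times> nat \<times> nat) set" where
  "S_Q q = {(a, b, c). 1 \<le> a \<and> 1 \<le> b \<and> 1 \<le> c \<and> b \<le> lseq q a \<and> c \<le> a}"

definition phi_Q :: "(nat \<Rightarrow> nat) \<Rightarrow> nat \<times> nat \<times> nat \<Rightarrow> nat" where
  "phi_Q q = (\<lambda>(a, b, c). Lseq q (a - 1) + (b - 1) * a + c)"

definition Q_special :: "(nat \<Rightarrow> nat) \<Rightarrow> (nat \<times> nat \<times> nat \<Rightarrow> int) \<Rightarrow> bool" where
  "Q_special q F \<longleftrightarrow>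
     (\<forall>a b. (a, b, 1) \<in> S_Q q \<longrightarrow> F (a, b, 1) = 0) \<and>
     (\<forall>a b c. (a, b, c) \<in> S_Q q \<longrightarrow> c > 1 \<longrightarrow>
        of_int (F (a, b, c)) / real (q (phi_Q q (a, b, c)))
          \<in> {(real c - 1) / real a - 1 / (2 * real a ^ 2) ..
             (real c - 1) / real a + 1 / (2 * real a ^ 2)})"

definition E_F :: "(nat \<Rightarrow> nat) \<Rightarrow> (nat \<times> nat \<times> nat \<Rightarrow> int) \<Rightarrow> nat \<Rightarrow> int" where
  "E_F q F n = F (THE s. s \<in> S_Q q \<and> phi_Q q s = n)"

definition x_F :: "(nat \<Rightarrow> nat) \<Rightarrow> (nat \<times> nat \<times> nat \<Rightarrow> int) \<Rightarrow> real" where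
  "x_F q F = (\<Sum>n. of_int (E_F q F (Suc n)) / (\<Prod>k\<in>{1..Suc n}. real (q k)))"

text \<open>E is the Q-Cantor series expansion of x (digits indexed from 1).\<close>
definition cantor_expansion :: "(nat \<Rightarrow> nat) \<Rightarrow> real \<Rightarrow> (nat \<Rightarrow> nat) \<Rightarrow> bool" where
  "cantor_expansion q x E \<longleftrightarrow>
     (\<forall>n\<ge>1. E n \<le> q n - 1) \<and>
     (\<forall>N. \<exists>n\<ge>N. n \<ge> 1 \<and> E n \<noteq> q n - 1) \<and>
     (\<lambda>n. real (E (Suc n)) / (\<Prod>k\<in>{1..Suc n}. real (q k))) sums x"

definition N_count :: "(nat \<Rightarrow> nat) \<Rightarrow> nat \<Rightarrow> nat \<Rightarrow> nat" where
  "N_count E d n = card {j \<in> {1..n}. E j = d}"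

definition Q1 :: "(nat \<Rightarrow> nat) \<Rightarrow> nat \<Rightarrow> real" where
  "Q1 q n = (\<Sum>j=1..n. 1 / real (q j))"

definition simply_Q_normal :: "(nat \<Rightarrow> nat) \<Rightarrow> real \<Rightarrow> bool" where
  "simply_Q_normal q x \<longleftrightarrow> 0 \<le> x \<and> x < 1 \<and>
     (\<exists>E. cantor_expansion q x E \<and>
        (\<forall>d::nat. (\<lambda>n. real (N_count E d n) / Q1 q n) \<longlonglongrightarrow> 1))"

end

theory Submission imports Defs begin

text \<open>
  Every digit of \<open>x\<^sub>F\<close> is either \<open>0\<close> or at least \<open>2a - 1 \<ge> 3\<close>: for \<open>c > 1\<close> the
  Q-special condition gives \<open>F/q \<ge> 1/a - 1/(2a\<^sup>2)\<close>, and the position of \<open>(a,b,c)\<close> lies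
  beyond \<open>\<nu>\<^sub>a\<close>, so that \<open>q \<ge> 2a\<^sup>2\<close>. The digits \<open>E\<^sub>F\<close> also vanish at the first position
  of every block, so they are not eventually \<open>q\<^sub>n - 1\<close>; by uniqueness of such Cantor
  expansions they are the expansion of \<open>x\<^sub>F\<close>. Hence the digit \<open>1\<close> never occurs and
  \<open>N\<^sub>n(1, x\<^sub>F) / Q\<^sub>n\<^sup>(\<^sup>1\<^sup>) = 0\<close> does not tend to \<open>1\<close>.
\<close>

section \<open>Cantor series\<close>

definition cantor_denom :: "(nat \<Rightarrow> nat) \<Rightarrow> nat \<Rightarrow> real" where
  "cantor_denom q N = (\<Prod>k\<in>{1..N}. real (q k))"

lemma cantor_denom_0 [simp]: "cantor_denom q 0 = 1"
  by (simp add: cantor_denom_def)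

lemma cantor_denom_Suc: "cantor_denom q (Suc N) = cantor_denom q N * real (q (Suc N))"
  by (simp add: cantor_denom_def prod.nat_ivl_Suc' mult.commute)

lemma cantor_expansion_iff:
  "cantor_expansion q x E \<longleftrightarrow>
     (\<forall>n\<ge>1. E n \<le> q n - 1) \<and> (\<forall>N. \<exists>n\<ge>N. n \<ge> 1 \<and> E n \<noteq> q n - 1) \<and>
     (\<lambda>n. real (E (Suc n)) / cantor_denom q (Suc n)) sums x"
  by (simp add: cantor_expansion_def cantor_denom_def)

lemma basic_seq_Suc: "basic_seq q \<Longrightarrow> 2 \<le> q (Suc n)"
  by (simp add: basic_seq_def)

lemma cantor_denom_ge_power: "basic_seq q \<Longrightarrow> 2 ^ N \<le> cantor_denom q N"
proof (induction N)
  case (Suc N)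
  have "(2::real) ^ N * 2 \<le> cantor_denom q N * real (q (Suc N))"
    using Suc basic_seq_Suc[OF Suc.prems, of N] by (intro mult_mono) (auto intro: order_trans[rotated])
  then show ?case by (simp add: cantor_denom_Suc mult.commute)
qed simp

lemma cantor_denom_pos: "basic_seq q \<Longrightarrow> 0 < cantor_denom q N"
  by (rule less_le_trans[OF _ cantor_denom_ge_power]) simp_all

lemma inverse_cantor_denom_tendsto_0:
  assumes "basic_seq q" shows "(\<lambda>n. 1 / cantor_denom q n) \<longlonglongrightarrow> 0"
proof (rule tendsto_sandwich[of "\<lambda>_. 0" _ _ "\<lambda>n. (1/2) ^ n"])
  show "\<forall>\<^sub>F n in sequentially. 1 / cantor_denom q n \<le> (1/2) ^ n"
  proof (intro always_eventually allI)
    fix n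
    show "1 / cantor_denom q n \<le> (1/2) ^ n"
      using cantor_denom_ge_power[OF assms, of n] cantor_denom_pos[OF assms, of n]
      by (simp add: power_divide divide_left_mono)
  qed
qed (use cantor_denom_pos[OF assms] in \<open>auto intro!: always_eventually less_imp_le LIMSEQ_realpow_zero\<close>)

lemma sums_max_digits_tail:
  assumes "basic_seq q"
  shows "(\<lambda>n. (real (q (Suc (n + N))) - 1) / cantor_denom q (Suc (n + N))) sums (1 / cantor_denom q N)"
proof -
  have "(\<lambda>n. 1 / cantor_denom q (n + N) - 1 / cantor_denom q (Suc n + N)) sums (1 / cantor_denom q (0 + N) - 0)"
    using inverse_cantor_denom_tendsto_0[OF assms]
    by (intro telescope_sums' LIMSEQ_ignore_initial_segment)
  moreover have "1 / cantor_denom q (n + N) - 1 / cantor_denom q (Suc n + N)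
      = (real (q (Suc (n + N))) - 1) / cantor_denom q (Suc (n + N))" for n
    using cantor_denom_pos[OF assms, of "n + N"] basic_seq_Suc[OF assms, of "n + N"]
    by (simp add: cantor_denom_Suc field_simps)
  ultimately show ?thesis by simp
qed

lemma real_digit_le:
  "basic_seq q \<Longrightarrow> E (Suc n) \<le> q (Suc n) - 1 \<Longrightarrow> real (E (Suc n)) \<le> real (q (Suc n)) - 1"
  using basic_seq_Suc[of q n] by (simp flip: of_nat_le_iff)

lemma real_digit_less:
  "basic_seq q \<Longrightarrow> E (Suc n) < q (Suc n) - 1 \<Longrightarrow> real (E (Suc n)) < real (q (Suc n)) - 1"
  using basic_seq_Suc[of q n] by (simp flip: of_nat_less_iff)

lemma summable_cantor_series:
  assumes "basic_seq q" "\<forall>n\<ge>1. E n \<le> q n - 1"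
  shows "summable (\<lambda>n. real (E (Suc n)) / cantor_denom q (Suc n))"
proof (rule summable_comparison_test[OF _ sums_summable[OF sums_max_digits_tail[OF assms(1), of 0]]])
  show "\<exists>N. \<forall>n\<ge>N. norm (real (E (Suc n)) / cantor_denom q (Suc n))
      \<le> (real (q (Suc (n + 0))) - 1) / cantor_denom q (Suc (n + 0))"
    using assms real_digit_le[OF assms(1)] cantor_denom_pos[OF assms(1)]
    by (auto simp: less_imp_le intro!: divide_right_mono)
qed

lemma sums_less:
  fixes f g :: "nat \<Rightarrow> real"
  assumes "\<And>n. f n \<le> g n" "f i < g i" "f sums s" "g sums t"
  shows "s < t"
proof -
  have "(\<lambda>n. g n - f n) sums (t - s)" using assms(4,3) by (rule sums_diff)
  moreover have "0 < (\<Sum>n. g n - f n)"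
    using assms(1,2) calculation by (subst suminf_pos_iff) (auto simp: sums_iff)
  ultimately show ?thesis by (simp add: sums_iff)
qed

fun cantor_prefix :: "(nat \<Rightarrow> nat) \<Rightarrow> (nat \<Rightarrow> nat) \<Rightarrow> nat \<Rightarrow> nat" where
  "cantor_prefix q E 0 = 0"
| "cantor_prefix q E (Suc N) = cantor_prefix q E N * q (Suc N) + E (Suc N)"

lemma cantor_denom_mult_partial_sum:
  assumes "basic_seq q"
  shows "cantor_denom q N * (\<Sum>n<N. real (E (Suc n)) / cantor_denom q (Suc n))
       = real (cantor_prefix q E N)"
proof (induction N)
  case (Suc N)
  have "cantor_denom q (Suc N) * (\<Sum>n<Suc N. real (E (Suc n)) / cantor_denom q (Suc n))
     = real (q (Suc N)) * (cantor_denom q N * (\<Sum>n<N. real (E (Suc n)) / cantor_denom q (Suc n)))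
       + real (E (Suc N))"
    using cantor_denom_pos[OF assms, of N] basic_seq_Suc[OF assms, of N]
    by (simp add: cantor_denom_Suc field_simps)
  then show ?case using Suc by simp
qed simp

text \<open>
  The scaled remainder lies in \<open>[0, 1)\<close>; strictness is where the condition that the
  digits are not eventually \<open>q\<^sub>n - 1\<close> enters.
\<close>

lemma cantor_remainder_bounds:
  fixes N :: nat
  assumes q: "basic_seq q" and x: "cantor_expansion q x E"
  defines "r \<equiv> cantor_denom q N * (x - (\<Sum>n<N. real (E (Suc n)) / cantor_denom q (Suc n)))"
  shows "0 \<le> r" "r < 1"
proof -
  define t where "t n = real (E (Suc n)) / cantor_denom q (Suc n)" for n
  define g where "g n = (real (q (Suc (n + N))) - 1) / cantor_denom q (Suc (n + N))" for n
  have digits: "\<forall>n\<ge>1. E n \<le> q n - 1" and not_max: "\<forall>N. \<exists>n\<ge>N. n \<ge> 1 \<and> E n \<noteq> q n - 1"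
    and "t sums x"
    using x unfolding cantor_expansion_iff t_def by auto
  then have tail: "(\<lambda>n. t (n + N)) sums (x - (\<Sum>n<N. t n))"
    by (simp add: sums_iff_shift)
  have g: "g sums (1 / cantor_denom q N)"
    unfolding g_def by (rule sums_max_digits_tail[OF q])
  have t_le_g: "t (n + N) \<le> g n" for n
    using digits real_digit_le[OF q, of E "n + N"] cantor_denom_pos[OF q, of "Suc (n + N)"]
    unfolding t_def g_def by (auto intro: divide_right_mono)
  obtain m where m: "Suc N \<le> m" "E m \<noteq> q m - 1" using not_max by auto
  then obtain i where i: "m = Suc (i + N)" by (metis add.commute less_eq_Suc_le less_natE)
  have "E m < q m - 1" using digits m by (simp add: le_neq_implies_less)
  then have "real (E (Suc (i + N))) < real (q (Suc (i + N))) - 1"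
    using real_digit_less[OF q] unfolding i by blast
  then have t_less_g: "t (i + N) < g i"
    using cantor_denom_pos[OF q, of "Suc (i + N)"] unfolding t_def g_def
    by (simp add: divide_strict_right_mono)
  have "x - (\<Sum>n<N. t n) < 1 / cantor_denom q N"
    by (rule sums_less[where f = "\<lambda>n. t (n + N)", OF t_le_g t_less_g tail g])
  then show "r < 1"
    using cantor_denom_pos[OF q, of N] unfolding r_def t_def by (simp add: field_simps)
  have "0 \<le> t n" for n
    using cantor_denom_pos[OF q, of "Suc n"] unfolding t_def by simp
  then have "0 \<le> x - (\<Sum>n<N. t n)"
    by (intro sums_le[OF _ sums_zero tail])
  then show "0 \<le> r"
    using cantor_denom_pos[OF q, of N] unfolding r_def t_def by simp
qed

lemma floor_cantor_denom_mult:
  assumes "basic_seq q" "cantor_expansion q x E"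
  shows "\<lfloor>cantor_denom q N * x\<rfloor> = int (cantor_prefix q E N)"
proof -
  have "cantor_denom q N * x = real (cantor_prefix q E N)
      + cantor_denom q N * (x - (\<Sum>n<N. real (E (Suc n)) / cantor_denom q (Suc n)))"
    using cantor_denom_mult_partial_sum[OF assms(1), of N E] by (simp add: algebra_simps)
  then show ?thesis
    using cantor_remainder_bounds[OF assms, of N] by (intro floor_unique) auto
qed

lemma cantor_expansion_unique:
  assumes "basic_seq q" "cantor_expansion q x E" "cantor_expansion q x E'" "1 \<le> n"
  shows "E n = E' n"
proof -
  have prefix: "cantor_prefix q E N = cantor_prefix q E' N" for N
    using floor_cantor_denom_mult[OF assms(1,2), of N] floor_cantor_denom_mult[OF assms(1,3), of N]
    by simp
  obtain m where "n = Suc m" using assms(4) by (cases n) auto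
  with prefix[of m] prefix[of "Suc m"] show ?thesis by simp
qed

lemma not_simply_normal_if_digit_omitted:
  assumes "basic_seq q" "cantor_expansion q x E" "\<forall>n\<ge>1. E n \<noteq> d"
  shows "\<not> simply_Q_normal q x"
proof
  assume "simply_Q_normal q x"
  then obtain E' where E': "cantor_expansion q x E'"
    and freq: "(\<lambda>n. real (N_count E' d n) / Q1 q n) \<longlonglongrightarrow> 1"
    unfolding simply_Q_normal_def by blast
  have "N_count E' d n = 0" for n
    using assms(3) cantor_expansion_unique[OF assms(1) E' assms(2)] by (auto simp: N_count_def)
  with freq have "(\<lambda>n. 0::real) \<longlonglongrightarrow> 1" by simp
  then show False using LIMSEQ_unique[OF tendsto_const] by fastforce
qed

section \<open>The enumeration \<open>\<phi>\<^sub>Q\<close> of \<open>S\<^sub>Q\<close>\<close>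

lemma lseq_ge_1: "1 \<le> lseq q i"
  by (simp add: lseq_def lstep_def)

lemma Lseq_Suc_lseq [simp]: "Lseq q (Suc i) = Lseq q i + Suc i * lseq q (Suc i)"
  by (simp add: lseq_def)

declare Lseq.simps(2) [simp del]

lemma Lseq_eq_pred: "1 \<le> a \<Longrightarrow> Lseq q a = Lseq q (a - 1) + a * lseq q a"
  by (cases a) simp_all

lemma strict_mono_Lseq: "strict_mono (Lseq q)"
  unfolding strict_mono_Suc_iff using lseq_ge_1 by (simp add: Suc_le_eq)

lemma Lseq_ge_self: "i \<le> Lseq q i"
  using strict_mono_Lseq by (rule strict_mono_imp_increasing)

lemma q_ge_if_nu_le:
  assumes "infinite_in_limit q" "nu q j \<le> m"
  shows "2 * j ^ 2 \<le> q m"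
proof -
  obtain N where "\<forall>m\<ge>N. 2 * j ^ 2 \<le> q m"
    using assms(1) unfolding infinite_in_limit_def filterlim_at_top eventually_sequentially by blast
  then have "\<exists>N. N \<ge> 1 \<and> (\<forall>m\<ge>N. 2 * j ^ 2 \<le> q m)"
    by (intro exI[of _ "max N 1"]) auto
  from LeastI_ex[OF this] show ?thesis
    using assms(2) unfolding nu_def by blast
qed

text \<open>This is what the recursion defining \<open>l\<^sub>i\<close> is designed for.\<close>

lemma nu_Suc_le_Lseq:
  assumes "1 \<le> i" shows "nu q (Suc i) - 1 \<le> Lseq q i"
proof (cases "i = 1")
  case True
  then show ?thesis by (simp add: lseq_def lstep_def numeral_2_eq_2)
next
  case False
  obtain j where j: "i = Suc j" using assms by (cases i) auto
  define P where "P k \<longleftrightarrow> k \<ge> 1 \<and> Lseq q j + i * k \<ge> nu q (i + 1) - 1" for k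
  have "P (LEAST k. P k)"
    by (rule LeastI[of P "max 1 (nu q (i + 1))"]) (simp add: P_def j trans_le_add2)
  moreover have "lseq q i = max (LEAST k. P k) 1"
    using False j unfolding lseq_def lstep_def P_def by simp
  ultimately show ?thesis
    unfolding P_def j by (simp add: max.absorb1)
qed

lemma phi_Q_in_block:
  assumes "(a, b, c) \<in> S_Q q"
  shows "Lseq q (a - 1) < phi_Q q (a, b, c)" "phi_Q q (a, b, c) \<le> Lseq q a"
proof -
  from assms have h: "1 \<le> a" "1 \<le> b" "1 \<le> c" "b \<le> lseq q a" "c \<le> a"
    by (auto simp: S_Q_def)
  have "(b - 1) * a + c \<le> (lseq q a - 1) * a + a"
    using h by (intro add_mono mult_le_mono1) auto
  also have "\<dots> = a * lseq q a"
    using lseq_ge_1[of q a] by (simp add: algebra_simps)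
  finally show "Lseq q (a - 1) < phi_Q q (a, b, c)" "phi_Q q (a, b, c) \<le> Lseq q a"
    using h Lseq_eq_pred[of a q] by (auto simp: phi_Q_def)
qed

lemma Lseq_block_unique:
  assumes "1 \<le> a" "1 \<le> a'"
    and "Lseq q (a - 1) < n" "n \<le> Lseq q a" "Lseq q (a' - 1) < n" "n \<le> Lseq q a'"
  shows "a = a'"
proof (rule linorder_cases[of a a'])
  assume "a < a'"
  then have "Lseq q a \<le> Lseq q (a' - 1)" by (simp add: strict_mono_less_eq[OF strict_mono_Lseq])
  with assms show ?thesis by linarith
next
  assume "a' < a"
  then have "Lseq q a' \<le> Lseq q (a - 1)" by (simp add: strict_mono_less_eq[OF strict_mono_Lseq])
  with assms show ?thesis by linarith
qed

lemma phi_Q_inj: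
  assumes "(a, b, c) \<in> S_Q q" "(a', b', c') \<in> S_Q q" "phi_Q q (a, b, c) = phi_Q q (a', b', c')"
  shows "(a, b, c) = (a', b', c')"
proof -
  have h: "1 \<le> a" "1 \<le> b" "1 \<le> c" "c \<le> a" "1 \<le> a'" "1 \<le> b'" "1 \<le> c'" "c' \<le> a'"
    using assms(1,2) by (auto simp: S_Q_def)
  have "a = a'"
    using phi_Q_in_block[OF assms(1)] phi_Q_in_block[OF assms(2)] h assms(3)
    by (intro Lseq_block_unique[of a a' q "phi_Q q (a, b, c)"]) auto
  then have eq: "(c - 1) + (b - 1) * a = (c' - 1) + (b' - 1) * a"
    using assms(3) h by (simp add: phi_Q_def)
  have div_mod: "(r + k * a) div a = k \<and> (r + k * a) mod a = r" if "r < a" for r k :: nat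
    using that by simp
  have "c - 1 < a" "c' - 1 < a" using h \<open>a = a'\<close> by auto
  then have "b - 1 = b' - 1" "c - 1 = c' - 1"
    using div_mod[of "c - 1" "b - 1"] div_mod[of "c' - 1" "b' - 1"] eq by metis+
  with \<open>a = a'\<close> h show ?thesis by auto
qed

lemma bij_betw_phi_Q: "bij_betw (phi_Q q) (S_Q q) {1..}"
proof (rule bij_betwI')
  fix s s' assume "s \<in> S_Q q" "s' \<in> S_Q q"
  then show "phi_Q q s = phi_Q q s' \<longleftrightarrow> s = s'"
    by (cases s, cases s') (auto dest: phi_Q_inj)
next
  fix s assume "s \<in> S_Q q"
  then show "phi_Q q s \<in> {1..}" by (auto simp: S_Q_def phi_Q_def)
next
  fix n :: nat assume "n \<in> {1..}"
  define a where "a = (LEAST a. n \<le> Lseq q a)"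
  have upper: "n \<le> Lseq q a"
    unfolding a_def by (rule LeastI[of _ n]) (rule Lseq_ge_self)
  then have "1 \<le> a" using \<open>n \<in> {1..}\<close> by (cases a) auto
  have lower: "Lseq q (a - 1) < n"
    using not_less_Least[of "a - 1" "\<lambda>a. n \<le> Lseq q a"] \<open>1 \<le> a\<close> unfolding a_def by linarith
  define m where "m = n - Lseq q (a - 1) - 1"
  have "m < a * lseq q a" using upper lower Lseq_eq_pred[OF \<open>1 \<le> a\<close>, of q] unfolding m_def by linarith
  then have "m div a < lseq q a" by (metis less_mult_imp_div_less mult.commute)
  then have "(a, m div a + 1, m mod a + 1) \<in> S_Q q"
    using \<open>1 \<le> a\<close> by (auto simp: S_Q_def Suc_le_eq)
  moreover have "phi_Q q (a, m div a + 1, m mod a + 1) = n"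
    using lower unfolding phi_Q_def m_def by simp
  ultimately show "\<exists>s\<in>S_Q q. n = phi_Q q s" by metis
qed

lemma E_F_phi_Q: "s \<in> S_Q q \<Longrightarrow> E_F q F (phi_Q q s) = F s"
  unfolding E_F_def
  by (intro arg_cong[of _ _ F] the_equality) (auto dest: inj_onD[OF bij_betw_imp_inj_on[OF bij_betw_phi_Q]])

section \<open>The digits of \<open>x\<^sub>F\<close>\<close>

lemma special_digit_bounds:
  fixes f Q a c :: real
  assumes "2 \<le> c" "c \<le> a" "2 * a ^ 2 \<le> Q"
    and "(c - 1) / a - 1 / (2 * a ^ 2) \<le> f / Q" "f / Q \<le> (c - 1) / a + 1 / (2 * a ^ 2)"
  shows "2 * a - 1 \<le> f" "f < Q"
proof -
  have a: "2 \<le> a" and Q: "0 < Q" using assms(1-3) by (auto intro: less_le_trans[OF _ assms(3)])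
  have "(2 * a - 1) / (2 * a ^ 2) = 1 / a - 1 / (2 * a ^ 2)"
    using a by (simp add: field_simps power2_eq_square)
  also have "\<dots> \<le> f / Q"
    using assms(1,4) a by (smt (verit) divide_right_mono)
  finally have ratio: "(2 * a - 1) / (2 * a ^ 2) \<le> f / Q" .
  have "2 * a - 1 = 2 * a ^ 2 * ((2 * a - 1) / (2 * a ^ 2))"
    using a by simp
  also have "\<dots> \<le> Q * ((2 * a - 1) / (2 * a ^ 2))"
    using assms(3) a by (intro mult_right_mono) auto
  also have "\<dots> \<le> Q * (f / Q)"
    using ratio Q by (intro mult_left_mono) auto
  finally show "2 * a - 1 \<le> f" using Q by simp
  have "f / Q \<le> (a - 1) / a + 1 / (2 * a ^ 2)"
    using assms(2,5) a by (smt (verit) divide_right_mono)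
  also have "\<dots> < 1"
    using a by (simp add: field_simps power2_eq_square)
  finally show "f < Q" using Q by (simp add: field_simps)
qed

lemma E_F_cases:
  assumes "infinite_in_limit q" "Q_special q F" "1 \<le> n"
  shows "E_F q F n = 0 \<or> 1 < E_F q F n \<and> E_F q F n < int (q n)"
proof -
  have "n \<in> phi_Q q ` S_Q q"
    using bij_betw_imp_surj_on[OF bij_betw_phi_Q, of q] assms(3) by simp
  then obtain a b c where abc: "(a, b, c) \<in> S_Q q" "phi_Q q (a, b, c) = n"
    by (metis imageE prod_cases3)
  then have digit: "E_F q F n = F (a, b, c)" and "1 \<le> c" "c \<le> a"
    using E_F_phi_Q[of "(a, b, c)" q F] by (auto simp: S_Q_def)
  show ?thesis
  proof (cases "c = 1")
    case True
    then show ?thesis using assms(2) abc digit unfolding Q_special_def by auto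
  next
    case False
    then have "2 \<le> c" "2 \<le> a" using \<open>1 \<le> c\<close> \<open>c \<le> a\<close> by auto
    then have "nu q (Suc (a - 1)) \<le> n"
      using nu_Suc_le_Lseq[of "a - 1" q] phi_Q_in_block(1)[OF abc(1)] abc(2) by linarith
    then have "2 * a ^ 2 \<le> q n"
      using q_ge_if_nu_le[OF assms(1)] \<open>2 \<le> a\<close> by (simp add: Suc_diff_1)
    then have "2 * real a ^ 2 \<le> real (q n)"
      by (metis of_nat_le_iff of_nat_mult of_nat_numeral of_nat_power)
    moreover have "of_int (F (a, b, c)) / real (q n)
        \<in> {(real c - 1) / real a - 1 / (2 * real a ^ 2) .. (real c - 1) / real a + 1 / (2 * real a ^ 2)}"
      using assms(2) abc False \<open>1 \<le> c\<close> unfolding Q_special_def by auto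
    ultimately have "2 * real a - 1 \<le> of_int (F (a, b, c))" "of_int (F (a, b, c)) < real (q n)"
      using special_digit_bounds[of "real c" "real a" "real (q n)"] \<open>2 \<le> c\<close> \<open>c \<le> a\<close> by auto
    then show ?thesis using digit \<open>2 \<le> a\<close> by linarith
  qed
qed

lemma E_F_block_start:
  assumes "Q_special q F" shows "E_F q F (Suc (Lseq q N)) = 0"
proof -
  have s: "(Suc N, 1, 1) \<in> S_Q q" using lseq_ge_1[of q "Suc N"] by (simp add: S_Q_def)
  have "E_F q F (Suc (Lseq q N)) = F (Suc N, 1, 1)"
    using E_F_phi_Q[OF s] by (simp add: phi_Q_def)
  also have "\<dots> = 0" using assms s unfolding Q_special_def by blast
  finally show ?thesis .
qed

lemma cantor_expansion_x_F:
  assumes "basic_seq q" "infinite_in_limit q" "Q_special q F"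
  shows "cantor_expansion q (x_F q F) (\<lambda>n. nat (E_F q F n))"
proof -
  have digits: "\<forall>n\<ge>1. nat (E_F q F n) \<le> q n - 1"
  proof (intro allI impI)
    fix n :: nat assume "1 \<le> n"
    then show "nat (E_F q F n) \<le> q n - 1" using E_F_cases[OF assms(2,3), of n] by auto
  qed
  have "\<exists>n\<ge>N. 1 \<le> n \<and> nat (E_F q F n) \<noteq> q n - 1" for N
  proof (intro exI conjI)
    show "N \<le> Suc (Lseq q N)" using Lseq_ge_self[of N q] by simp
    show "nat (E_F q F (Suc (Lseq q N))) \<noteq> q (Suc (Lseq q N)) - 1"
      using E_F_block_start[OF assms(3)] basic_seq_Suc[OF assms(1), of "Lseq q N"] by simp
  qed simp
  moreover have "(\<lambda>n. real (nat (E_F q F (Suc n))) / cantor_denom q (Suc n)) sums x_F q F"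
  proof -
    have "real (nat (E_F q F (Suc n))) = of_int (E_F q F (Suc n))" for n
      using E_F_cases[OF assms(2,3), of "Suc n"] by auto
    then have "x_F q F = (\<Sum>n. real (nat (E_F q F (Suc n))) / cantor_denom q (Suc n))"
      unfolding x_F_def cantor_denom_def by simp
    then show ?thesis using summable_cantor_series[OF assms(1) digits] by (simp add: summable_sums)
  qed
  ultimately show ?thesis using digits unfolding cantor_expansion_iff by blast
qed

theorem mainTheorem2:
  fixes q :: "nat \<Rightarrow> nat" and F :: "nat \<times> nat \<times> nat \<Rightarrow> int"
  assumes "basic_seq q" and "infinite_in_limit q" and "Q_special q F"
  shows "\<not> simply_Q_normal q (x_F q F)"
proof (rule not_simply_normal_if_digit_omitted[OF assms(1) cantor_expansion_x_F[OF assms]])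
  show "\<forall>n\<ge>1. nat (E_F q F n) \<noteq> 1"
  proof (intro allI impI)
    fix n :: nat assume "1 \<le> n"
    then show "nat (E_F q F n) \<noteq> 1" using E_F_cases[OF assms(2,3), of n] by auto
  qed
qed

end
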